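(* Let $V$ be a finite dimensional symplectic vector space over a field $\mathbb{K}$ of characteristic zero, with symplectic form represented by $\omega_0\in\wedge^2V\subset V^{\otimes2}$. If $a\in\widehat T(V)$ satisfies $|a\,\omega_0^l|=0$ for all $l\ge1$, then there is $b\in\widehat T(V)$ such that $a=[\omega_0,b]$.
   Context: $\widehat T(V)=\prod_{m\ge0}V^{\otimes m}$ is the completed tensor algebra; $|\widehat T(V)|$ is its quotient by the closure of the span of commutators, with projection $x\mapsto|x|$. *)

theory Defs
  imports Main
begin

text \<open>
  V is modelled as the K-vector space with basis (e_i) indexed by a finite type 'i.
  The completed tensor algebra prod_m V^{\<otimes>m} is modelled as formal noncommutative
  power series: an element is the function sending a word w = [i1,...,im] to the
  coefficient of e_{i1} \<otimes> ... \<otimes> e_{im}.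
\<close>

type_synonym ('i, 'k) ctensor = "'i list \<Rightarrow> 'k"

definition tone :: "('i, 'k::comm_ring_1) ctensor" where
  "tone = (\<lambda>w. if w = [] then 1 else 0)"

definition tmul :: "('i, 'k::comm_ring_1) ctensor \<Rightarrow> ('i, 'k) ctensor \<Rightarrow> ('i, 'k) ctensor" where
  "tmul a b = (\<lambda>w. \<Sum>k\<le>length w. a (take k w) * b (drop k w))"

primrec tpow :: "('i, 'k::comm_ring_1) ctensor \<Rightarrow> nat \<Rightarrow> ('i, 'k) ctensor" where
  "tpow x 0 = tone"
| "tpow x (Suc n) = tmul x (tpow x n)"

definition tcomm :: "('i, 'k::comm_ring_1) ctensor \<Rightarrow> ('i, 'k) ctensor \<Rightarrow> ('i, 'k) ctensor" where
  "tcomm x y = (\<lambda>w. tmul x y w - tmul y x w)"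

definition comm_span :: "('i, 'k::comm_ring_1) ctensor set" where
  "comm_span = {s. \<exists>(n::nat) (c::nat \<Rightarrow> 'k) x y. s = (\<lambda>w. \<Sum>i<n. c i * tcomm (x i) (y i) w)}"

text \<open>Closure in the (degree-filtration = product) topology: x is in the closure of S
  iff every basic neighbourhood x + prod_{m \<ge> N} V^{\<otimes>m} meets S.\<close>
definition tclosure :: "('i, 'k::comm_ring_1) ctensor set \<Rightarrow> ('i, 'k) ctensor set" where
  "tclosure S = {x. \<forall>N. \<exists>s\<in>S. \<forall>w. length w < N \<longrightarrow> x w = s w}"

text \<open>|x| = 0 in |T(V)| = T(V) / closure(span of commutators).\<close>
definition cyc_zero :: "('i, 'k::comm_ring_1) ctensor \<Rightarrow> bool" where
  "cyc_zero x \<longleftrightarrow> x \<in> tclosure comm_span"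

text \<open>Symplectic form on V given by its Gram matrix W i j = omega(e_i, e_j):
  alternating and nondegenerate.\<close>
definition symplectic_form :: "('i::finite \<Rightarrow> 'i \<Rightarrow> 'k::field) \<Rightarrow> bool" where
  "symplectic_form W \<longleftrightarrow>
     (\<forall>i. W i i = 0) \<and> (\<forall>i j. W i j = - W j i) \<and>
     (\<forall>v. (\<forall>u. (\<Sum>i\<in>UNIV. \<Sum>j\<in>UNIV. v i * W i j * u j) = 0) \<longrightarrow> (\<forall>i. v i = 0))"

text \<open>omega_0 = sum_{i,j} P i j e_i \<otimes> e_j represents the form W: P is the inverse
  matrix of W (the bivector corresponding to omega under V \<cong> V^* ).\<close>
definition represents :: "('i::finite \<Rightarrow> 'i \<Rightarrow> 'k::field) \<Rightarrow> ('i \<Rightarrow> 'i \<Rightarrow> 'k) \<Rightarrow> bool" where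
  "represents P W \<longleftrightarrow> (\<forall>i j. (\<Sum>k\<in>UNIV. P i k * W k j) = (if i = j then 1 else 0))"

definition bivector :: "('i \<Rightarrow> 'i \<Rightarrow> 'k::comm_ring_1) \<Rightarrow> ('i, 'k) ctensor" where
  "bivector P = (\<lambda>w. if length w = 2 then P (w ! 0) (w ! 1) else 0)"

end

(*
  Fix letters a, b with P a b ~= 0, where omega = sum P i j e_i e_j.  Words in the letters e_i
  and the factor omega that never contain e_a e_b ("normal patterns") form a basis of each
  homogeneous component: expanding a normal pattern gives a nonzero multiple of the word
  obtained by replacing every omega with e_a e_b, plus words of smaller rank.  Modulo
  [omega, T(V)] the leading factors omega of a pattern can be rotated to its end, so a
  homogeneous component x of a is congruent to a combination x' of normal patterns that either
  start with a letter or are powers of omega.  Summing coefficients over all rotations of a word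
  kills the closure of the commutators, so the hypothesis says that the cyclic sums of
  x' omega^l vanish for all l >= 1.  For a pattern C starting with a letter and l large, the
  coefficient of e_b omega^(l-1) C e_a in the cyclic sum of x' omega^l is P a b times the
  coefficient of C in x'.  For omega^m, evaluating the cyclic sum of omega^(m+l) at
  (e_a e_b)^(m+l) gives 2 (m+l) (P a b)^(m+l) ~= 0 when m + l is even, by characteristic zero.
  Hence x' = 0 and x = [omega, y] for some y.
*)
theory Submission
  imports Defs
begin

section \<open>Homogeneous components and products\<close>

definition homogeneous :: "nat \<Rightarrow> ('i, 'k::comm_ring_1) ctensor \<Rightarrow> bool" where
  "homogeneous n x \<longleftrightarrow> (\<forall>w. length w \<noteq> n \<longrightarrow> x w = 0)"

definition degree_part :: "nat \<Rightarrow> ('i, 'k::comm_ring_1) ctensor \<Rightarrow> ('i, 'k) ctensor" where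
  "degree_part n x = (\<lambda>w. if length w = n then x w else 0)"

lemma homogeneousD: "homogeneous n x \<Longrightarrow> length w \<noteq> n \<Longrightarrow> x w = 0"
  by (simp add: homogeneous_def)

lemma degree_part_homogeneous: "homogeneous n x \<Longrightarrow> degree_part n x = x"
  by (auto simp: degree_part_def homogeneous_def)

lemma homogeneous_degree_part: "homogeneous n (degree_part n x)"
  by (simp add: homogeneous_def degree_part_def)

lemma homogeneous_sum:
  "(\<And>i. i \<in> I \<Longrightarrow> homogeneous n (f i)) \<Longrightarrow> homogeneous n (\<lambda>w. \<Sum>i\<in>I. f i w)"
  unfolding homogeneous_def by (auto intro!: sum.neutral)

lemma homogeneous_scale: "homogeneous n x \<Longrightarrow> homogeneous n (\<lambda>w. c * x w)"
  by (simp add: homogeneous_def)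

lemma tmul_assoc: "tmul (tmul x y) z = tmul x (tmul y z)"
proof
  fix w :: "'a list"
  define L where "L = length w"
  define F where "F j m = x (take j w) * y (take m (drop j w)) * z (drop (j + m) w)" for j m
  have "tmul (tmul x y) z w = (\<Sum>k\<le>L. \<Sum>j\<le>k. F j (k - j))"
    unfolding tmul_def L_def sum_distrib_right
    by (intro sum.cong refl) (auto simp: F_def drop_take min_def)
  also have "\<dots> = (\<Sum>(j, m)\<in>{(j, m). j + m \<le> L}. F j m)"
    by (rule sum.triangle_reindex_eq[symmetric])
  also have "\<dots> = (\<Sum>j\<le>L. \<Sum>m\<le>L - j. F j m)"
    by (subst sum.Sigma) (auto intro!: sum.cong)
  also have "\<dots> = tmul x (tmul y z) w"
    unfolding tmul_def L_def sum_distrib_left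
    by (intro sum.cong refl) (auto simp: F_def add.commute mult.assoc)
  finally show "tmul (tmul x y) z w = tmul x (tmul y z) w" .
qed

lemma tmul_homogeneous_left:
  assumes "homogeneous p x"
  shows "tmul x y w = (if p \<le> length w then x (take p w) * y (drop p w) else 0)"
proof -
  have "tmul x y w = (\<Sum>k\<le>length w. if k = p then x (take p w) * y (drop p w) else 0)"
    unfolding tmul_def
    by (intro sum.cong refl) (use assms in \<open>auto simp: homogeneous_def min_def\<close>)
  then show ?thesis by simp
qed

lemma tmul_homogeneous_right:
  assumes "homogeneous q y"
  shows "tmul x y w =
    (if q \<le> length w then x (take (length w - q) w) * y (drop (length w - q) w) else 0)"
proof -
  have "tmul x y w = (\<Sum>k\<le>length w. if k = length w - q \<and> q \<le> length w
      then x (take (length w - q) w) * y (drop (length w - q) w) else 0)"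
    unfolding tmul_def
    by (intro sum.cong refl) (use assms in \<open>auto simp: homogeneous_def\<close>)
  then show ?thesis by (cases "q \<le> length w") simp_all
qed

lemma tmul_homogeneous:
  assumes "homogeneous p x" "homogeneous q y"
  shows "tmul x y w = (if length w = p + q then x (take p w) * y (drop p w) else 0)"
  using assms by (auto simp: tmul_homogeneous_left homogeneous_def)

lemma homogeneous_tmul: "homogeneous p x \<Longrightarrow> homogeneous q y \<Longrightarrow> homogeneous (p + q) (tmul x y)"
  by (simp add: homogeneous_def tmul_homogeneous)

lemma tmul_append: "homogeneous p x \<Longrightarrow> length u = p \<Longrightarrow> tmul x y (u @ v) = x u * y v"
  by (simp add: tmul_homogeneous_left)

lemma tmul3_append:
  assumes "homogeneous p x" "homogeneous q y" "length u1 = p" "length u2 = q"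
  shows "tmul (tmul x y) z (u1 @ u2 @ u3) = x u1 * y u2 * z u3"
  using tmul_append[OF homogeneous_tmul[OF assms(1,2)], of "u1 @ u2" z u3]
    tmul_append[OF assms(1,3)] assms(3,4) by simp

lemma tmul_sum_left: "tmul (\<lambda>w. \<Sum>i\<in>I. f i w) y = (\<lambda>w. \<Sum>i\<in>I. tmul (f i) y w)"
  unfolding tmul_def by (rule ext) (simp add: sum_distrib_right, rule sum.swap)

lemma tmul_sum_right: "tmul x (\<lambda>w. \<Sum>i\<in>I. f i w) = (\<lambda>w. \<Sum>i\<in>I. tmul x (f i) w)"
  unfolding tmul_def by (rule ext) (simp add: sum_distrib_left, rule sum.swap)

lemma tmul_scale_left: "tmul (\<lambda>w. c * x w) y = (\<lambda>w. c * tmul x y w)"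
  unfolding tmul_def by (rule ext) (simp add: sum_distrib_left mult.assoc)

lemma tmul_scale_right: "tmul x (\<lambda>w. c * y w) = (\<lambda>w. c * tmul x y w)"
  unfolding tmul_def by (rule ext) (simp add: sum_distrib_left mult.left_commute)

lemma tmul_diff_left: "tmul (\<lambda>w. x w - x' w) y = (\<lambda>w. tmul x y w - tmul x' y w)"
  unfolding tmul_def by (rule ext) (simp add: left_diff_distrib sum_subtractf)

lemma tmul_add_left: "tmul (\<lambda>w. x w + x' w) y = (\<lambda>w. tmul x y w + tmul x' y w)"
  unfolding tmul_def by (rule ext) (simp add: distrib_right sum.distrib)

lemma tmul_add_right: "tmul x (\<lambda>w. y w + y' w) = (\<lambda>w. tmul x y w + tmul x y' w)"
  unfolding tmul_def by (rule ext) (simp add: distrib_left sum.distrib)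

lemma tmul_zero_left: "tmul (\<lambda>w. 0) y = (\<lambda>w. 0)"
  unfolding tmul_def by simp

lemma tmul_zero_right: "tmul x (\<lambda>w. 0) = (\<lambda>w. 0)"
  unfolding tmul_def by simp

lemma tcomm_add_right: "tcomm x (\<lambda>w. y w + y' w) = (\<lambda>w. tcomm x y w + tcomm x y' w)"
  unfolding tcomm_def tmul_add_right tmul_add_left by (rule ext) simp

lemma tcomm_scale_right: "tcomm x (\<lambda>w. c * y w) = (\<lambda>w. c * tcomm x y w)"
  unfolding tcomm_def tmul_scale_right tmul_scale_left by (rule ext) (simp add: right_diff_distrib)

lemma tcomm_sum_right: "tcomm x (\<lambda>w. \<Sum>i\<in>I. f i w) = (\<lambda>w. \<Sum>i\<in>I. tcomm x (f i) w)"
  unfolding tcomm_def tmul_sum_right tmul_sum_left by (rule ext) (simp add: sum_subtractf)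

lemma tcomm_zero_right: "tcomm x (\<lambda>w. 0) = (\<lambda>w. 0)"
  unfolding tcomm_def tmul_zero_right tmul_zero_left by simp

lemma tmul_tcomm_commuting:
  assumes "tmul x z = tmul z x"
  shows "tmul (tcomm x y) z = tcomm x (tmul y z)"
  unfolding tcomm_def tmul_diff_left by (simp add: tmul_assoc assms)


lemma tcomm_of_degree_parts:
  assumes z: "homogeneous d z" and x: "\<And>n. degree_part n x = tcomm z (y n)"
  shows "x = tcomm z (\<lambda>v. y (length v + d) v)"
proof
  fix w :: "'a list"
  have "x w = tcomm z (y (length w)) w"
    using x[of "length w"] by (metis degree_part_def)
  also have "\<dots> = tcomm z (\<lambda>v. y (length v + d) v) w"
  proof (cases "d \<le> length w")
    case True
    then have "length w - d + d = length w" by simp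
    then show ?thesis
      using True by (simp add: tcomm_def tmul_homogeneous_left[OF z] tmul_homogeneous_right[OF z])
  qed (simp add: tcomm_def tmul_homogeneous_left[OF z] tmul_homogeneous_right[OF z])
  finally show "x w = tcomm z (\<lambda>v. y (length v + d) v) w" .
qed

section \<open>Cyclic sums\<close>

definition cyclic_sum :: "('i, 'k::comm_ring_1) ctensor \<Rightarrow> ('i, 'k) ctensor" where
  "cyclic_sum x w = (\<Sum>r<length w. x (rotate r w))"

lemma cyclic_sum_diff: "cyclic_sum (\<lambda>w. x w - y w) = (\<lambda>w. cyclic_sum x w - cyclic_sum y w)"
  by (rule ext) (simp add: cyclic_sum_def sum_subtractf)

lemma cyclic_sum_sum:
  "cyclic_sum (\<lambda>w. \<Sum>i\<in>I. c i * f i w) = (\<lambda>w. \<Sum>i\<in>I. c i * cyclic_sum (f i) w)"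
  unfolding cyclic_sum_def by (rule ext) (simp add: sum_distrib_left, rule sum.swap)

lemma cyclic_sum_scale: "cyclic_sum (\<lambda>w. c * x w) = (\<lambda>w. c * cyclic_sum x w)"
  unfolding cyclic_sum_def by (rule ext) (simp add: sum_distrib_left)

lemma cyclic_sum_tmul_commute: "cyclic_sum (tmul x y) = cyclic_sum (tmul y x)"
proof
  fix w :: "'a list"
  define N where "N = length w"
  show "cyclic_sum (tmul x y) w = cyclic_sum (tmul y x) w"
  proof (cases "N = 0")
    case True then show ?thesis by (simp add: cyclic_sum_def N_def)
  next
    case False
    define g where "g = (\<lambda>(r, k). x (take k (rotate r w)) * y (drop k (rotate r w)))"
    define h where "h = (\<lambda>(r, k). y (take k (rotate r w)) * x (drop k (rotate r w)))"
    \<comment> \<open>cutting the \<open>r\<close>-th rotation after \<open>k\<close> letters and swapping the two parts is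
      cutting the \<open>(r + k)\<close>-th rotation after \<open>N - k\<close> letters\<close>
    define \<phi> where "\<phi> = (\<lambda>(r, k). ((r + k) mod N, N - k))"
    have \<phi>: "\<phi> (\<phi> p) = p \<and> \<phi> p \<in> {..<N} \<times> {..N} \<and> h (\<phi> p) = g p"
      if "p \<in> {..<N} \<times> {..N}" for p
    proof -
      obtain r k where "p = (r, k)" by (cases p)
      with that have p: "p = (r, k)" "r < N" "k \<le> N" by auto
      have "((r + k) mod N + (N - k)) mod N = (r + k + (N - k)) mod N" by (simp add: mod_add_left_eq)
      then have inv: "\<phi> (\<phi> p) = p" using p by (simp add: \<phi>_def)
      define w' where "w' = rotate r w"
      have w': "length w' = N" by (simp add: w'_def N_def)
      have "rotate ((r + k) mod N) w = rotate k w'"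
        by (metis N_def rotate_conv_mod rotate_rotate w'_def add.commute)
      moreover have "take (N - k) (rotate k w') = drop k w' \<and> drop (N - k) (rotate k w') = take k w'"
        using p w' by (cases "k = N") (simp_all add: rotate_drop_take)
      ultimately have "h (\<phi> p) = g p"
        using p by (simp add: \<phi>_def h_def g_def w'_def[symmetric] mult.commute)
      then show ?thesis using inv p False by (simp add: \<phi>_def)
    qed
    have "cyclic_sum (tmul x y) w = sum g ({..<N} \<times> {..N})"
      unfolding cyclic_sum_def tmul_def g_def N_def by (simp add: sum.cartesian_product)
    also have "\<dots> = sum h ({..<N} \<times> {..N})"
      by (rule sum.reindex_bij_witness[where i=\<phi> and j=\<phi>]) (use \<phi> in blast)+
    also have "\<dots> = cyclic_sum (tmul y x) w"
      unfolding cyclic_sum_def tmul_def h_def N_def by (simp add: sum.cartesian_product)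
    finally show ?thesis .
  qed
qed

lemma cyclic_sum_tcomm: "cyclic_sum (tcomm x y) = (\<lambda>w. 0)"
  unfolding tcomm_def cyclic_sum_diff cyclic_sum_tmul_commute[of x y] by simp

lemma cyclic_sum_comm_span: "s \<in> comm_span \<Longrightarrow> cyclic_sum s = (\<lambda>w. 0)"
  unfolding comm_span_def by (auto simp: cyclic_sum_sum cyclic_sum_tcomm)

lemma cyclic_sum_cyc_zero:
  assumes "cyc_zero x"
  shows "cyclic_sum x = (\<lambda>w. 0)"
proof
  fix w :: "'a list"
  obtain s where s: "s \<in> comm_span" "\<forall>v. length v < Suc (length w) \<longrightarrow> x v = s v"
    using assms unfolding cyc_zero_def tclosure_def by blast
  have "cyclic_sum x w = cyclic_sum s w"
    unfolding cyclic_sum_def using s(2) by (intro sum.cong) auto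
  then show "cyclic_sum x w = 0" by (simp add: cyclic_sum_comm_span[OF s(1)])
qed

lemma cyclic_sum_tmul_degree_part:
  assumes "homogeneous q y" and "cyclic_sum (tmul x y) = (\<lambda>w. 0)"
  shows "cyclic_sum (tmul (degree_part n x) y) = (\<lambda>w. 0)"
proof
  fix w :: "'a list"
  have "tmul (degree_part n x) y v = (if length v = n + q then tmul x y v else 0)" for v
    using assms(1) by (auto simp: tmul_homogeneous_right degree_part_def)
  then have "cyclic_sum (tmul (degree_part n x) y) w =
      (if length w = n + q then cyclic_sum (tmul x y) w else 0)"
    by (simp add: cyclic_sum_def)
  then show "cyclic_sum (tmul (degree_part n x) y) w = 0" using assms(2) by simp
qed

section \<open>Products of letters and \<open>\<omega>\<close>\<close>

text \<open>A pattern is a word in the letters \<open>e\<^sub>i\<close> (written \<open>Some i\<close>) and \<open>\<omega>\<close> (written \<open>None\<close>);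
  \<open>ptensor P C\<close> is the corresponding product in \<open>T(V)\<close>, where \<open>\<omega> = \<Sum>\<^sub>i\<^sub>j P i j e\<^sub>i e\<^sub>j\<close>.\<close>

fun pdeg :: "'i option list \<Rightarrow> nat" where
  "pdeg [] = 0"
| "pdeg (Some c # C) = Suc (pdeg C)"
| "pdeg (None # C) = Suc (Suc (pdeg C))"

fun ptensor :: "('i \<Rightarrow> 'i \<Rightarrow> 'k::comm_ring_1) \<Rightarrow> 'i option list \<Rightarrow> ('i, 'k) ctensor" where
  "ptensor P [] w = (if w = [] then 1 else 0)"
| "ptensor P (Some c # C) w = (case w of [] \<Rightarrow> 0 | x # w' \<Rightarrow> if x = c then ptensor P C w' else 0)"
| "ptensor P (None # C) w = (case w of x # y # w' \<Rightarrow> P x y * ptensor P C w' | _ \<Rightarrow> 0)"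

lemma pdeg_append [simp]: "pdeg (C @ D) = pdeg C + pdeg D"
  by (induction C rule: pdeg.induct) auto

lemma pdeg_replicate_None [simp]: "pdeg (replicate l None) = 2 * l"
  by (induction l) auto

lemma length_le_pdeg: "length C \<le> pdeg C"
  by (induction C rule: pdeg.induct) auto

lemma count_list_replicate_same [simp]: "count_list (replicate k x) x = k"
  by (induction k) auto

lemma pdeg_eq_length_count: "pdeg C = length C + count_list C None"
  by (induction C rule: pdeg.induct) auto

lemma ptensor_eq_0: "length w \<noteq> pdeg C \<Longrightarrow> ptensor P C w = 0"
proof (induction C arbitrary: w rule: pdeg.induct)
  case (2 c C) then show ?case by (cases w) auto
next
  case (3 C) then show ?case by (cases w rule: remdups_adj.cases) auto
qed simp

lemma homogeneous_ptensor: "homogeneous (pdeg C) (ptensor P C)"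
  by (simp add: homogeneous_def ptensor_eq_0)

lemma homogeneous_ptensor_omegas: "homogeneous (2 * l) (ptensor P (replicate l None))"
  using homogeneous_ptensor[of "replicate l None"] by simp

lemma ptensor_append:
  "ptensor P (C @ D) w = (if length w = pdeg C + pdeg D
     then ptensor P C (take (pdeg C) w) * ptensor P D (drop (pdeg C) w) else 0)"
proof (induction C arbitrary: w rule: pdeg.induct)
  case 1 then show ?case by (auto simp: ptensor_eq_0)
next
  case (2 c C) then show ?case by (cases w) auto
next
  case (3 C) then show ?case by (cases w rule: remdups_adj.cases) (auto simp: mult.assoc)
qed

lemma ptensor_append_tmul: "ptensor P (C @ D) = tmul (ptensor P C) (ptensor P D)"
  by (rule ext) (simp add: ptensor_append tmul_homogeneous[OF homogeneous_ptensor homogeneous_ptensor])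

lemma ptensor_append_eq:
  "length u = pdeg C \<Longrightarrow> ptensor P (C @ D) (u @ v) = ptensor P C u * ptensor P D v"
  by (cases "length v = pdeg D") (auto simp: ptensor_append ptensor_eq_0)

lemma ptensor_snoc_Some:
  "ptensor P (C @ [Some c]) (u @ [x]) = (if x = c then ptensor P C u else 0)"
  by (cases "length u = pdeg C") (auto simp: ptensor_append ptensor_eq_0)

lemma ptensor_None: "ptensor P [None] = bivector P"
proof
  fix w show "ptensor P [None] w = bivector P w"
    by (cases w rule: remdups_adj.cases) (auto simp: bivector_def)
qed

lemma tpow_bivector: "tpow (bivector P) l = ptensor P (replicate l None)"
proof (induction l)
  case 0 show ?case by (rule ext) (simp add: tone_def)
next
  case (Suc l)
  have "ptensor P ([None] @ replicate l None) = tmul (bivector P) (tpow (bivector P) l)"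
    by (simp only: ptensor_append_tmul ptensor_None Suc)
  then show ?case by simp
qed

definition monomial :: "'i list \<Rightarrow> ('i, 'k::comm_ring_1) ctensor" where
  "monomial u = (\<lambda>w. if w = u then 1 else 0)"

lemma homogeneous_monomial: "homogeneous (length u) (monomial u)"
  by (simp add: homogeneous_def monomial_def)

lemma finite_words_length: "finite {w :: 'i::finite list. length w = k}"
  using finite_lists_length_eq[of "UNIV :: 'i set" k] by simp

lemma homogeneous_monomial_expansion:
  fixes x :: "('i::finite, 'k::comm_ring_1) ctensor"
  assumes "homogeneous n x"
  shows "x = (\<lambda>w. \<Sum>u\<in>{u. length u = n}. x u * monomial u w)"
proof
  fix w
  have "(\<Sum>u\<in>{u. length u = n}. x u * monomial u w) = (\<Sum>u\<in>{u. length u = n}. if w = u then x u else 0)"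
    by (rule sum.cong) (auto simp: monomial_def)
  also have "\<dots> = x w"
    using homogeneousD[OF assms] by (simp add: finite_words_length)
  finally show "x w = (\<Sum>u\<in>{u. length u = n}. x u * monomial u w)" by simp
qed

lemma tmul_omegas_rotate_even:
  assumes x: "homogeneous n x" and len: "length w = n + 2 * l" and i: "i \<le> l"
  shows "tmul x (ptensor P (replicate l None)) (rotate (2 * i) w) =
    tmul (tmul (ptensor P (replicate i None)) x) (ptensor P (replicate (l - i) None)) w"
proof -
  define u1 u2 u3 where "u1 = take (2 * i) w" and "u2 = take n (drop (2 * i) w)"
    and "u3 = drop (2 * i + n) w"
  have w: "w = u1 @ u2 @ u3" unfolding u1_def u2_def u3_def
    by (metis append_take_drop_id drop_drop add.commute)
  have l1: "length u1 = 2 * i" and l2: "length u2 = n" and l3: "length u3 = 2 * (l - i)"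
    using len i by (auto simp: u1_def u2_def u3_def)
  have "rotate (2 * i) w = u2 @ u3 @ u1"
    using rotate_append[of u1 "u2 @ u3"] l1 w by simp
  moreover have "replicate l None = replicate (l - i) None @ replicate i (None :: 'a option)"
    using i by (simp add: replicate_add[symmetric])
  ultimately show ?thesis
    using l1 l2 l3 w
    by (simp add: tmul_append[OF x] tmul3_append[OF homogeneous_ptensor_omegas x] ptensor_append_eq)
qed

lemma tmul_omegas_rotate_odd:
  fixes x :: "('i::finite, 'k::comm_ring_1) ctensor"
  assumes x: "homogeneous n x" and len: "length w = n + 2 * l" and j: "j < l"
  shows "tmul x (ptensor P (replicate l None)) (rotate (Suc (2 * j)) w) =
    (\<Sum>c\<in>UNIV. \<Sum>d\<in>UNIV. P c d *
       tmul (tmul (ptensor P (Some d # replicate j None)) x)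
            (ptensor P (replicate (l - 1 - j) None @ [Some c])) w)"
proof -
  define m where "m = l - 1 - j"
  define u1 u2 u3 where "u1 = take (2 * j + 1) w" and "u2 = take n (drop (2 * j + 1) w)"
    and "u3 = drop (2 * j + 1 + n) w"
  have w: "w = u1 @ u2 @ u3" unfolding u1_def u2_def u3_def
    by (metis append_take_drop_id drop_drop add.commute)
  have l1: "length u1 = 2 * j + 1" and l2: "length u2 = n" and l3: "length u3 = 2 * m + 1"
    using len j by (auto simp: u1_def u2_def u3_def m_def)
  obtain p u1' where u1: "u1 = p # u1'" using l1 by (cases u1) auto
  obtain u3' q where u3: "u3 = u3' @ [q]" using l3 by (cases u3 rule: rev_cases) auto
  have l1': "length u1' = 2 * j" and l3': "length u3' = 2 * m" using l1 l3 u1 u3 by auto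
  have "rotate (Suc (2 * j)) w = u2 @ u3' @ q # p # u1'"
    using rotate_append[of u1 "u2 @ u3"] l1 w u1 u3 by simp
  moreover have "l = m + Suc j" using j by (simp add: m_def)
  then have "replicate l None = replicate m None @ None # replicate j (None :: 'i option)"
    by (simp add: replicate_add replicate_append_same)
  ultimately have lhs: "tmul x (ptensor P (replicate l None)) (rotate (Suc (2 * j)) w) =
      x u2 * (ptensor P (replicate m None) u3' * (P q p * ptensor P (replicate j None) u1'))"
    using l2 l3' by (simp add: tmul_append[OF x] ptensor_append_eq)
  have rhs: "P c d * tmul (tmul (ptensor P (Some d # replicate j None)) x)
        (ptensor P (replicate m None @ [Some c])) w =
      (if d = p then if c = q then P q p * ptensor P (replicate j None) u1' * x u2 *
         ptensor P (replicate m None) u3' else 0 else 0)" for c d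
    using tmul3_append[OF homogeneous_ptensor x, of u1 "Some d # replicate j None" u2]
      l1 l2 w u1 u3 by (simp add: ptensor_snoc_Some)
  show ?thesis
    unfolding lhs m_def[symmetric] rhs by (simp add: ac_simps)
qed

lemma tmul_omegas_rotate_inside:
  fixes x :: "('i::finite, 'k::comm_ring_1) ctensor"
  assumes x: "homogeneous n x" and len: "length w = n + 2 * l" and k: "k \<le> n"
  shows "tmul x (ptensor P (replicate l None)) (rotate (k + 2 * l) w) =
    (\<Sum>\<alpha>\<in>{\<alpha>. length \<alpha> = k}. \<Sum>\<beta>\<in>{\<beta>. length \<beta> = n - k}.
       x (\<beta> @ \<alpha>) * tmul (tmul (monomial \<alpha>) (ptensor P (replicate l None))) (monomial \<beta>) w)"
proof -
  define u1 u2 u3 where "u1 = take k w" and "u2 = take (2 * l) (drop k w)"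
    and "u3 = drop (k + 2 * l) w"
  have w: "w = u1 @ u2 @ u3" unfolding u1_def u2_def u3_def
    by (metis append_take_drop_id drop_drop add.commute)
  have l1: "length u1 = k" and l2: "length u2 = 2 * l" and l3: "length u3 = n - k"
    using len k by (auto simp: u1_def u2_def u3_def)
  have "rotate (k + 2 * l) w = (u3 @ u1) @ u2"
    using rotate_append[of "u1 @ u2" u3] l1 l2 w by simp
  then have lhs: "tmul x (ptensor P (replicate l None)) (rotate (k + 2 * l) w) =
      x (u3 @ u1) * ptensor P (replicate l None) u2"
    using tmul_append[OF x, of "u3 @ u1"] l1 l3 k by simp
  have T: "tmul (tmul (monomial \<alpha>) (ptensor P (replicate l None))) (monomial \<beta>) w =
      (if \<alpha> = u1 then if \<beta> = u3 then ptensor P (replicate l None) u2 else 0 else 0)"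
    if "length \<alpha> = k" for \<alpha> \<beta>
  proof -
    have "tmul (tmul (monomial \<alpha>) (ptensor P (replicate l None))) (monomial \<beta>) (u1 @ u2 @ u3) =
        monomial \<alpha> u1 * ptensor P (replicate l None) u2 * monomial \<beta> u3"
      by (rule tmul3_append[OF homogeneous_monomial homogeneous_ptensor_omegas]) (use that l1 l2 in auto)
    then show ?thesis using w by (simp add: monomial_def)
  qed
  have "(\<Sum>\<alpha>\<in>{\<alpha>. length \<alpha> = k}. \<Sum>\<beta>\<in>{\<beta>. length \<beta> = n - k}.
       x (\<beta> @ \<alpha>) * tmul (tmul (monomial \<alpha>) (ptensor P (replicate l None))) (monomial \<beta>) w) =
    (\<Sum>\<alpha>\<in>{\<alpha>. length \<alpha> = k}. if \<alpha> = u1 then \<Sum>\<beta>\<in>{\<beta>. length \<beta> = n - k}.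
       if \<beta> = u3 then x (\<beta> @ \<alpha>) * ptensor P (replicate l None) u2 else 0 else 0)"
    by (intro sum.cong refl) (auto simp: T intro!: sum.cong)
  then show ?thesis
    unfolding lhs using l1 l3 by (simp add: finite_words_length)
qed

text \<open>Rotations of a word of \<open>x \<omega>\<^sup>l\<close> either move whole factors \<open>\<omega>\<close> to the front, split one
  factor \<open>\<omega>\<close>, or cut through the \<open>x\<close>-part.\<close>

lemma cyclic_sum_tmul_omegas:
  fixes x :: "('i::finite, 'k::comm_ring_1) ctensor"
  assumes x: "homogeneous n x" and len: "length w = n + 2 * l"
  shows "cyclic_sum (tmul x (ptensor P (replicate l None))) w =
    (\<Sum>i<l. tmul (tmul (ptensor P (replicate i None)) x) (ptensor P (replicate (l - i) None)) w
       + (\<Sum>c\<in>UNIV. \<Sum>d\<in>UNIV. P c d *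
            tmul (tmul (ptensor P (Some d # replicate i None)) x)
                 (ptensor P (replicate (l - 1 - i) None @ [Some c])) w))
  + (\<Sum>k<n. \<Sum>\<alpha>\<in>{\<alpha>. length \<alpha> = k}. \<Sum>\<beta>\<in>{\<beta>. length \<beta> = n - k}.
       x (\<beta> @ \<alpha>) * tmul (tmul (monomial \<alpha>) (ptensor P (replicate l None))) (monomial \<beta>) w)"
proof -
  define F where "F r = tmul x (ptensor P (replicate l None)) (rotate r w)" for r
  have split: "{..<n + 2 * l} = {..<l * 2} \<union> {0 + 2 * l..<n + 2 * l}" by auto
  have "cyclic_sum (tmul x (ptensor P (replicate l None))) w =
      sum F {..<l * 2} + sum F {0 + 2 * l..<n + 2 * l}"
    unfolding cyclic_sum_def F_def len split by (rule sum.union_disjoint) auto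
  also have "sum F {..<l * 2} = (\<Sum>i<l. F (2 * i) + F (Suc (2 * i)))"
    by (simp flip: sum.nat_group add: mult.commute)
  also have "sum F {0 + 2 * l..<n + 2 * l} = (\<Sum>k<n. F (k + 2 * l))"
    by (simp only: sum.shift_bounds_nat_ivl atLeast0LessThan)
  finally show ?thesis
    unfolding F_def
    by (simp add: tmul_omegas_rotate_even[OF x len] tmul_omegas_rotate_odd[OF x len]
        tmul_omegas_rotate_inside[OF x len] del: rotate_Suc)
qed

lemma homogeneous_zero: "homogeneous n (\<lambda>w. 0)"
  by (simp add: homogeneous_def)

lemma ptensor_omegas_append_mod_tcomm:
  "\<exists>y. homogeneous (pdeg D + 2 * k - 2) y \<and>
     ptensor P (replicate k None @ D) = (\<lambda>w. ptensor P (D @ replicate k None) w + tcomm (bivector P) y w)"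
proof (induction k arbitrary: D)
  case 0
  show ?case using homogeneous_zero by (intro exI[of _ "\<lambda>w. 0"]) (simp add: tcomm_zero_right)
next
  case (Suc k)
  obtain y where y: "homogeneous (pdeg D + 2 * k) y"
    and IH: "ptensor P (replicate k None @ D @ [None]) =
      (\<lambda>w. ptensor P (D @ replicate (Suc k) None) w + tcomm (bivector P) y w)"
    using Suc[of "D @ [None]"] by (auto simp: replicate_append_same)
  \<comment> \<open>\<open>\<omega> (\<omega>\<^sup>k D) = (\<omega>\<^sup>k D) \<omega> + [\<omega>, \<omega>\<^sup>k D]\<close>, and the induction hypothesis applies to \<open>\<omega>\<^sup>k (D \<omega>)\<close>\<close>
  have "ptensor P (replicate (Suc k) None @ D) =
      (\<lambda>w. ptensor P (replicate k None @ D @ [None]) w + tcomm (bivector P) (ptensor P (replicate k None @ D)) w)"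
    unfolding tcomm_def ptensor_None[symmetric] ptensor_append_tmul[symmetric] by (simp del: ptensor.simps)
  also have "\<dots> = (\<lambda>w. ptensor P (D @ replicate (Suc k) None) w +
      tcomm (bivector P) (\<lambda>w. y w + ptensor P (replicate k None @ D) w) w)"
    unfolding IH tcomm_add_right by (simp add: add.assoc)
  finally show ?case
    using homogeneous_ptensor[of "replicate k None @ D" P] y
    by (intro exI[of _ "\<lambda>w. y w + ptensor P (replicate k None @ D) w"])
      (auto simp: homogeneous_def add.commute)
qed

definition rotate_omegas :: "'i option list \<Rightarrow> 'i option list" where
  "rotate_omegas C = dropWhile (\<lambda>s. s = None) C @ takeWhile (\<lambda>s. s = None) C"

lemma rotate_omegas_split:
  obtains k D where "C = replicate k None @ D" and "rotate_omegas C = D @ replicate k None"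
proof
  have "\<forall>s\<in>set (takeWhile (\<lambda>s. s = None) C). s = None" by (auto dest: set_takeWhileD)
  then have T: "takeWhile (\<lambda>s. s = None) C = replicate (length (takeWhile (\<lambda>s. s = None) C)) None"
    by (simp add: replicate_length_same)
  then show "C = replicate (length (takeWhile (\<lambda>s. s = None) C)) None @ dropWhile (\<lambda>s. s = None) C"
    by (metis takeWhile_dropWhile_id)
  show "rotate_omegas C = dropWhile (\<lambda>s. s = None) C @ replicate (length (takeWhile (\<lambda>s. s = None) C)) None"
    unfolding rotate_omegas_def by (subst T) (rule refl)
qed

lemma pdeg_rotate_omegas [simp]: "pdeg (rotate_omegas C) = pdeg C"
  by (rule rotate_omegas_split[of C]) simp

lemma ptensor_rotate_omegas_mod_tcomm:
  "\<exists>y. homogeneous (pdeg C - 2) y \<and>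
     ptensor P C = (\<lambda>w. ptensor P (rotate_omegas C) w + tcomm (bivector P) y w)"
proof -
  obtain k D where "C = replicate k None @ D" and "rotate_omegas C = D @ replicate k None"
    by (rule rotate_omegas_split)
  then show ?thesis using ptensor_omegas_append_mod_tcomm[of D k P] by (simp add: add.commute)
qed

lemma rotate_omegas_cases: "hd (rotate_omegas C) \<noteq> None \<or> set (rotate_omegas C) \<subseteq> {None}"
proof (cases "dropWhile (\<lambda>s. s = None) C")
  case Nil
  have "set (takeWhile (\<lambda>s. s = None) C) \<subseteq> {None}" by (auto dest: set_takeWhileD)
  then show ?thesis by (simp add: rotate_omegas_def Nil)
next
  case (Cons s D)
  then show ?thesis using hd_dropWhile[of "\<lambda>s. s = None" C] by (simp add: rotate_omegas_def)
qed

lemma rotate1_alternating: "rotate1 (concat (replicate M [x, y])) = concat (replicate M [y, x])"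
proof -
  have "y # concat (replicate M [x, y]) @ [x] = concat (replicate (Suc M) [y, x])" for M
    by (induction M) auto
  then show ?thesis by (cases M) auto
qed

lemma rotate_alternating:
  "rotate r (concat (replicate M [x, y])) =
     (if even r then concat (replicate M [x, y]) else concat (replicate M [y, x]))"
  by (induction r) (simp_all add: rotate1_alternating)

lemma ptensor_omegas_alternating: "ptensor P (replicate M None) (concat (replicate M [x, y])) = P x y ^ M"
  by (induction M) auto

section \<open>Normal patterns form a basis\<close>

locale pattern_basis =
  fixes P :: "'i::finite \<Rightarrow> 'i \<Rightarrow> 'k::field_char_0" and a b :: 'i
  assumes antisym: "P x y = - P y x" and nonzero: "P a b \<noteq> 0"
begin

lemma P_diag: "P x x = 0"
  using antisym[of x x] by simp

lemma a_neq_b: "a \<noteq> b"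
  using nonzero P_diag by auto

fun normal :: "'i option list \<Rightarrow> bool" where
  "normal [] = True"
| "normal [s] = True"
| "normal (s # t # C) = (\<not> (s = Some a \<and> t = Some b) \<and> normal (t # C))"

fun leading_word :: "'i option list \<Rightarrow> 'i list" where
  "leading_word [] = []"
| "leading_word (Some c # C) = c # leading_word C"
| "leading_word (None # C) = a # b # leading_word C"

fun parse :: "'i list \<Rightarrow> 'i option list" where
  "parse [] = []"
| "parse [x] = [Some x]"
| "parse (x # y # w) = (if x = a \<and> y = b then None # parse w else Some x # parse (y # w))"

text \<open>The digits are chosen such that \<open>e\<^sub>a e\<^sub>b\<close> is the largest two-letter word \<open>e\<^sub>x e\<^sub>y\<close>
  with \<open>P x y \<noteq> 0\<close> (recall \<open>P a a = 0\<close>).\<close>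

definition letter_rank :: "'i \<Rightarrow> nat" where
  "letter_rank x = (if x = a then 2 else if x = b then 1 else 0)"

fun word_rank :: "'i list \<Rightarrow> nat" where
  "word_rank [] = 0"
| "word_rank (x # w) = letter_rank x * 3 ^ length w + word_rank w"

lemma length_leading_word [simp]: "length (leading_word C) = pdeg C"
  by (induction C rule: leading_word.induct) auto

lemma leading_word_parse [simp]: "leading_word (parse w) = w"
  by (induction w rule: parse.induct) auto

lemma pdeg_parse [simp]: "pdeg (parse w) = length w"
  by (induction w rule: parse.induct) auto

lemma normal_Cons: "normal (s # C) \<longleftrightarrow> normal C \<and> \<not> (s = Some a \<and> C \<noteq> [] \<and> hd C = Some b)"
  by (cases C) auto

lemma normal_append:
  "normal (C @ D) \<longleftrightarrow>
     normal C \<and> normal D \<and> \<not> (C \<noteq> [] \<and> D \<noteq> [] \<and> last C = Some a \<and> hd D = Some b)"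
proof (induction C)
  case (Cons s C) then show ?case by (cases C) (auto simp: normal_Cons)
qed simp

lemma normal_omegas: "normal (replicate l None)"
  by (induction l) (auto simp: normal_Cons)

lemma normal_omegas_snoc: "normal (replicate k None @ [Some c])"
  by (induction k) (auto simp: normal_Cons)

lemma normal_parse: "normal (parse w)"
proof (induction w rule: parse.induct)
  case (3 x y w)
  show ?case
  proof (cases "x = a \<and> y = b")
    case True
    then show ?thesis using 3 by (simp add: normal_Cons)
  next
    case False
    have "parse (y # w) \<noteq> [] \<and> (hd (parse (y # w)) = Some b \<longrightarrow> y = b)"
      by (cases w) auto
    then show ?thesis using False 3(2) by (auto simp: normal_Cons)
  qed
qed simp_all

lemma parse_leading_word: "normal C \<Longrightarrow> parse (leading_word C) = C"
proof (induction C rule: leading_word.induct)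
  case (2 c C)
  have "\<not> (c = a \<and> hd (leading_word C) = b \<and> leading_word C \<noteq> [])"
    using 2(2) a_neq_b by (cases C rule: leading_word.cases) (auto simp: normal_Cons)
  then have "parse (c # leading_word C) = Some c # parse (leading_word C)"
    by (cases "leading_word C") auto
  then show ?case using 2 by (simp add: normal_Cons)
next
  case (3 C) then show ?case by (simp add: normal_Cons)
qed simp

lemma word_rank_less: "word_rank w < 3 ^ length w"
proof (induction w)
  case (Cons x w)
  have "letter_rank x \<le> 2" by (simp add: letter_rank_def)
  then have "letter_rank x * 3 ^ length w \<le> 2 * 3 ^ length w" by simp
  then show ?case unfolding word_rank.simps length_Cons power_Suc using Cons by linarith
qed simp

lemma ptensor_leading_word: "ptensor P C (leading_word C) \<noteq> 0"
  by (induction C rule: leading_word.induct) (auto simp: nonzero)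

lemma ptensor_triangular:
  "ptensor P C w \<noteq> 0 \<Longrightarrow> w = leading_word C \<or> word_rank w < word_rank (leading_word C)"
proof (induction C arbitrary: w rule: leading_word.induct)
  case 1 then show ?case by (auto split: if_splits)
next
  case (2 c C)
  then obtain w' where w: "w = c # w'" and nz: "ptensor P C w' \<noteq> 0"
    by (cases w) (auto split: if_splits)
  have "length w' = length (leading_word C)" using nz ptensor_eq_0 by fastforce
  then show ?case using 2(1)[OF nz] w by auto
next
  case (3 C)
  then obtain x y w' where w: "w = x # y # w'" and Pxy: "P x y \<noteq> 0" and nz: "ptensor P C w' \<noteq> 0"
    by (cases w rule: remdups_adj.cases) auto
  have len: "length w' = length (leading_word C)" using nz ptensor_eq_0 by fastforce
  show ?case
  proof (cases "x = a \<and> y = b")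
    case True
    then show ?thesis using 3(1)[OF nz] w len by auto
  next
    case False
    define L where "L = length w'"
    have "x = a \<Longrightarrow> y \<noteq> a" using Pxy P_diag by auto
    then have digits: "3 * letter_rank x + letter_rank y \<le> 6"
      using False a_neq_b by (auto simp: letter_rank_def)
    have "word_rank w = (3 * letter_rank x + letter_rank y) * 3 ^ L + word_rank w'"
      using w by (simp add: L_def algebra_simps)
    also have "\<dots> < (3 * letter_rank x + letter_rank y) * 3 ^ L + 3 ^ L"
      using word_rank_less[of w'] by (simp add: L_def)
    also have "\<dots> \<le> 7 * 3 ^ L" using digits by simp
    also have "\<dots> \<le> word_rank (leading_word (None # C))"
      using len a_neq_b by (simp add: L_def letter_rank_def)
    finally show ?thesis by simp
  qed
qed

definition normal_patterns :: "nat \<Rightarrow> 'i option list set" where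
  "normal_patterns n = {C. normal C \<and> pdeg C = n}"

lemma homogeneous_ptensor_normal: "B \<in> normal_patterns m \<Longrightarrow> homogeneous m (ptensor P B)"
  using homogeneous_ptensor[of B P] by (simp add: normal_patterns_def)

lemma finite_normal_patterns: "finite (normal_patterns n)"
proof (rule finite_subset)
  show "normal_patterns n \<subseteq> {C. set C \<subseteq> UNIV \<and> length C \<le> n}"
    using length_le_pdeg by (auto simp: normal_patterns_def intro: order_trans)
qed (rule finite_lists_length_le, simp)

definition pcomb :: "nat \<Rightarrow> ('i option list \<Rightarrow> 'k) \<Rightarrow> ('i, 'k) ctensor" where
  "pcomb n \<gamma> = (\<lambda>w. \<Sum>C\<in>normal_patterns n. \<gamma> C * ptensor P C w)"

lemma pcomb_sum: "pcomb n (\<lambda>C. \<Sum>i\<in>I. f i * \<gamma> i C) = (\<lambda>w. \<Sum>i\<in>I. f i * pcomb n (\<gamma> i) w)"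
  unfolding pcomb_def by (rule ext) (simp add: sum_distrib_right sum_distrib_left mult.assoc, rule sum.swap)

lemma pcomb_scale: "pcomb n (\<lambda>C. c * \<gamma> C) = (\<lambda>w. c * pcomb n \<gamma> w)"
  unfolding pcomb_def by (rule ext) (simp add: sum_distrib_left mult.assoc)

lemma pcomb_add: "pcomb n (\<lambda>C. \<gamma> C + \<delta> C) = (\<lambda>w. pcomb n \<gamma> w + pcomb n \<delta> w)"
  unfolding pcomb_def by (rule ext) (simp add: distrib_right sum.distrib)

lemma pcomb_diff: "pcomb n (\<lambda>C. \<gamma> C - \<delta> C) = (\<lambda>w. pcomb n \<gamma> w - pcomb n \<delta> w)"
  unfolding pcomb_def by (rule ext) (simp add: left_diff_distrib sum_subtractf)

lemma pcomb_delta: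
  "C \<in> normal_patterns n \<Longrightarrow> pcomb n (\<lambda>D. if D = C then 1 else 0) = ptensor P C"
  unfolding pcomb_def
  by (rule ext) (simp add: if_distrib[where f="\<lambda>u. u * _"] finite_normal_patterns cong: if_cong)

lemma pcomb_reindex:
  assumes "\<And>B. B \<in> normal_patterns n \<Longrightarrow> f B \<in> normal_patterns n"
  shows "pcomb n (\<lambda>C. \<Sum>B\<in>normal_patterns n. if f B = C then c B else 0) w =
    (\<Sum>B\<in>normal_patterns n. c B * ptensor P (f B) w)"
  unfolding pcomb_def sum_distrib_right
  by (subst sum.swap) (simp add: if_distrib[where f="\<lambda>u. u * _"] assms finite_normal_patterns cong: if_cong)

lemma monomial_in_span: "length w = n \<Longrightarrow> \<exists>\<gamma>. monomial w = pcomb n \<gamma>"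
proof (induction "word_rank w" arbitrary: w rule: less_induct)
  case less
  define C where "C = parse w"
  have C: "C \<in> normal_patterns n" using less.prems by (simp add: C_def normal_patterns_def normal_parse)
  define c where "c = ptensor P C w"
  have c: "c \<noteq> 0" using ptensor_leading_word[of C] by (simp add: c_def C_def)
  define S where "S = {u. length u = n \<and> u \<noteq> w \<and> ptensor P C u \<noteq> 0}"
  have "\<exists>\<gamma>. monomial u = pcomb n \<gamma>" if "u \<in> S" for u
  proof -
    have "word_rank u < word_rank w"
      using ptensor_triangular[of C u] that by (auto simp: S_def C_def)
    then show ?thesis using less.hyps that by (auto simp: S_def)
  qed
  then obtain \<Gamma> where \<Gamma>: "\<forall>u\<in>S. monomial u = pcomb n (\<Gamma> u)" by metis
  \<comment> \<open>\<open>C\<close> is \<open>c\<close> times \<open>w\<close> plus monomials of smaller rank, which are in the span by induction\<close>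
  have expand: "ptensor P C v = c * monomial w v + (\<Sum>u\<in>S. ptensor P C u * monomial u v)" for v
  proof -
    have "ptensor P C v = (\<Sum>u\<in>{u. length u = n}. ptensor P C u * monomial u v)"
      by (rule fun_cong[OF homogeneous_monomial_expansion[OF homogeneous_ptensor_normal[OF C]]])
    also have "\<dots> = c * monomial w v + (\<Sum>u\<in>{u. length u = n} - {w}. ptensor P C u * monomial u v)"
      using less.prems by (simp add: sum.remove finite_words_length c_def)
    also have "(\<Sum>u\<in>{u. length u = n} - {w}. ptensor P C u * monomial u v) =
        (\<Sum>u\<in>S. ptensor P C u * monomial u v)"
      by (rule sum.mono_neutral_right) (auto simp: S_def finite_words_length)
    finally show ?thesis .
  qed
  define \<gamma> where "\<gamma> D = inverse c * ((if D = C then 1 else 0) - (\<Sum>u\<in>S. ptensor P C u * \<Gamma> u D))"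
    for D
  have "pcomb n \<gamma> = (\<lambda>v. inverse c * (ptensor P C v - (\<Sum>u\<in>S. ptensor P C u * pcomb n (\<Gamma> u) v)))"
    unfolding \<gamma>_def pcomb_scale pcomb_diff pcomb_sum pcomb_delta[OF C] ..
  also have "\<dots> = (\<lambda>v. inverse c * (ptensor P C v - (\<Sum>u\<in>S. ptensor P C u * monomial u v)))"
    using \<Gamma> by simp
  also have "\<dots> = monomial w"
  proof
    fix v
    show "inverse c * (ptensor P C v - (\<Sum>u\<in>S. ptensor P C u * monomial u v)) = monomial w v"
      unfolding expand[of v] using c by simp
  qed
  finally show ?case by metis
qed

lemma degree_part_in_span: "\<exists>\<gamma>. degree_part n x = pcomb n \<gamma>"
proof -
  have "\<forall>u\<in>{u. length u = n}. \<exists>\<gamma>. monomial u = pcomb n \<gamma>"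
    using monomial_in_span by blast
  then obtain \<Gamma> where \<Gamma>: "\<forall>u\<in>{u. length u = n}. monomial u = pcomb n (\<Gamma> u)"
    by (rule bchoice[THEN exE])
  have "degree_part n x = (\<lambda>w. \<Sum>u\<in>{u. length u = n}. x u * monomial u w)"
    by (subst homogeneous_monomial_expansion[OF homogeneous_degree_part])
      (auto simp: degree_part_def intro!: sum.cong)
  also have "\<dots> = pcomb n (\<lambda>C. \<Sum>u\<in>{u. length u = n}. x u * \<Gamma> u C)"
    using \<Gamma> by (simp add: pcomb_sum)
  finally show ?thesis by blast
qed

lemma pcomb_eq_0D:
  assumes "pcomb n \<gamma> = (\<lambda>w. 0)" and "C \<in> normal_patterns n"
  shows "\<gamma> C = 0"
proof (rule ccontr)
  assume "\<gamma> C \<noteq> 0"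
  define S where "S = {C \<in> normal_patterns n. \<gamma> C \<noteq> 0}"
  have S: "finite S" "S \<noteq> {}"
    using finite_normal_patterns \<open>\<gamma> C \<noteq> 0\<close> assms(2) by (auto simp: S_def)
  \<comment> \<open>the pattern of maximal leading rank is the only one contributing to its leading word\<close>
  obtain C1 where C1: "C1 \<in> S" and max: "\<And>D. D \<in> S \<Longrightarrow> word_rank (leading_word D) \<le> word_rank (leading_word C1)"
    using Max_in[of "(\<lambda>D. word_rank (leading_word D)) ` S"] Max_ge[of "(\<lambda>D. word_rank (leading_word D)) ` S"] S
    by fastforce
  have "(\<Sum>D\<in>normal_patterns n - {C1}. \<gamma> D * ptensor P D (leading_word C1)) = 0"
  proof (rule sum.neutral, rule ballI, rule ccontr)
    fix D assume that: "D \<in> normal_patterns n - {C1}"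
    assume "\<gamma> D * ptensor P D (leading_word C1) \<noteq> 0"
    then have "D \<in> S" and "ptensor P D (leading_word C1) \<noteq> 0" using that by (auto simp: S_def)
    then have "leading_word C1 = leading_word D" using ptensor_triangular max by fastforce
    then have "C1 = D"
      using C1 \<open>D \<in> S\<close> parse_leading_word by (metis S_def mem_Collect_eq normal_patterns_def)
    then show False using that by simp
  qed
  then have "0 = \<gamma> C1 * ptensor P C1 (leading_word C1)"
    using fun_cong[OF assms(1), of "leading_word C1"] C1 finite_normal_patterns
    by (simp add: pcomb_def sum.remove[of _ C1] S_def del: Diff_iff)
  then show False using ptensor_leading_word[of C1] C1 by (simp add: S_def)
qed

definition pcoeff :: "nat \<Rightarrow> ('i, 'k) ctensor \<Rightarrow> 'i option list \<Rightarrow> 'k" where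
  "pcoeff n x = (SOME \<gamma>. degree_part n x = pcomb n \<gamma>)"

lemma degree_part_eq_pcomb_pcoeff: "degree_part n x = pcomb n (pcoeff n x)"
  unfolding pcoeff_def using degree_part_in_span by (rule someI_ex)

lemma pcomb_pcoeff: "homogeneous n x \<Longrightarrow> pcomb n (pcoeff n x) = x"
  by (metis degree_part_eq_pcomb_pcoeff degree_part_homogeneous)

lemma pcoeff_eqI:
  assumes "degree_part n x = pcomb n \<gamma>" and "C \<in> normal_patterns n"
  shows "pcoeff n x C = \<gamma> C"
proof -
  have "pcomb n (\<lambda>D. pcoeff n x D - \<gamma> D) = (\<lambda>w. 0)"
    unfolding pcomb_diff using degree_part_eq_pcomb_pcoeff[of n x] assms(1) by simp
  then show ?thesis using pcomb_eq_0D[OF _ assms(2)] by fastforce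
qed

lemma pcoeff_ptensor:
  assumes "C \<in> normal_patterns n" "D \<in> normal_patterns n"
  shows "pcoeff n (ptensor P D) C = (if C = D then 1 else 0)"
proof (rule pcoeff_eqI[OF _ assms(1)])
  show "degree_part n (ptensor P D) = pcomb n (\<lambda>C. if C = D then 1 else 0)"
    by (simp add: pcomb_delta[OF assms(2)] degree_part_homogeneous[OF homogeneous_ptensor_normal[OF assms(2)]])
qed

lemma pcoeff_cong:
  "(\<And>w. length w = n \<Longrightarrow> x w = y w) \<Longrightarrow> pcoeff n x = pcoeff n y"
  unfolding pcoeff_def degree_part_def by (simp cong: if_cong)

lemma pcoeff_sum:
  assumes "C \<in> normal_patterns n"
  shows "pcoeff n (\<lambda>w. \<Sum>i\<in>I. f i w) C = (\<Sum>i\<in>I. pcoeff n (f i) C)"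
proof (rule pcoeff_eqI[OF _ assms])
  have "degree_part n (\<lambda>w. \<Sum>i\<in>I. f i w) = (\<lambda>w. \<Sum>i\<in>I. 1 * degree_part n (f i) w)"
    by (simp add: degree_part_def fun_eq_iff)
  then show "degree_part n (\<lambda>w. \<Sum>i\<in>I. f i w) = pcomb n (\<lambda>C. \<Sum>i\<in>I. pcoeff n (f i) C)"
    using pcomb_sum[of n "\<lambda>_. 1" "\<lambda>i. pcoeff n (f i)" I]
    by (simp add: degree_part_eq_pcomb_pcoeff)
qed

lemma pcoeff_zero: "C \<in> normal_patterns n \<Longrightarrow> pcoeff n (\<lambda>w. 0) C = 0"
  using pcoeff_sum[of C n "\<lambda>_. undefined" "{}"] by simp

lemma pcoeff_scale:
  assumes "C \<in> normal_patterns n"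
  shows "pcoeff n (\<lambda>w. c * x w) C = c * pcoeff n x C"
proof (rule pcoeff_eqI[OF _ assms])
  show "degree_part n (\<lambda>w. c * x w) = pcomb n (\<lambda>C. c * pcoeff n x C)"
    unfolding pcomb_scale degree_part_eq_pcomb_pcoeff[symmetric] by (simp add: degree_part_def fun_eq_iff)
qed

lemma pcoeff_add:
  assumes "C \<in> normal_patterns n"
  shows "pcoeff n (\<lambda>w. x w + y w) C = pcoeff n x C + pcoeff n y C"
proof (rule pcoeff_eqI[OF _ assms])
  show "degree_part n (\<lambda>w. x w + y w) = pcomb n (\<lambda>C. pcoeff n x C + pcoeff n y C)"
    unfolding pcomb_add degree_part_eq_pcomb_pcoeff[symmetric] by (simp add: degree_part_def fun_eq_iff)
qed

lemma tmul_ptensor_right_expand: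
  assumes "homogeneous p u"
  shows "tmul u (ptensor P D) = (\<lambda>w. \<Sum>B\<in>normal_patterns p. pcoeff p u B * ptensor P (B @ D) w)"
proof -
  have "tmul u (ptensor P D) = tmul (pcomb p (pcoeff p u)) (ptensor P D)"
    using pcomb_pcoeff[OF assms] by simp
  then show ?thesis by (simp add: pcomb_def tmul_sum_left tmul_scale_left ptensor_append_tmul)
qed

lemma tmul_ptensor_left_expand:
  assumes "homogeneous q v"
  shows "tmul (ptensor P D) v = (\<lambda>w. \<Sum>B\<in>normal_patterns q. pcoeff q v B * ptensor P (D @ B) w)"
proof -
  have "tmul (ptensor P D) v = tmul (ptensor P D) (pcomb q (pcoeff q v))"
    using pcomb_pcoeff[OF assms] by simp
  then show ?thesis by (simp add: pcomb_def tmul_sum_right tmul_scale_right ptensor_append_tmul)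
qed

text \<open>A factor \<open>\<omega>\<close> at the boundary of a product cannot merge with the other factor into
  \<open>e\<^sub>a e\<^sub>b\<close>, so it survives in every normal pattern of the product.\<close>

lemma pcoeff_tmul_suffix:
  assumes u: "homogeneous p u" and D: "normal D" "D \<noteq> []" "hd D = None"
    and N: "N = p + pdeg D" and C: "C \<in> normal_patterns N"
    and nz: "pcoeff N (tmul u (ptensor P D)) C \<noteq> 0"
  shows "\<exists>t. C = t @ D"
proof -
  have BD: "B @ D \<in> normal_patterns N" if "B \<in> normal_patterns p" for B
    using that D N by (auto simp: normal_patterns_def normal_append)
  have "pcoeff N (tmul u (ptensor P D)) C =
      (\<Sum>B\<in>normal_patterns p. pcoeff p u B * (if C = B @ D then 1 else 0))"
    by (simp add: tmul_ptensor_right_expand[OF u] pcoeff_sum pcoeff_scale pcoeff_ptensor[OF C BD] C)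
  with nz obtain B where "pcoeff p u B * (if C = B @ D then 1 else 0) \<noteq> 0"
    by (auto elim: sum.not_neutral_contains_not_neutral)
  then have "C = B @ D" by (simp split: if_split_asm)
  then show ?thesis by blast
qed

lemma pcoeff_tmul_prefix:
  assumes v: "homogeneous q v" and D: "normal D" "D \<noteq> []" "last D = None"
    and N: "N = pdeg D + q" and C: "C \<in> normal_patterns N"
    and nz: "pcoeff N (tmul (ptensor P D) v) C \<noteq> 0"
  shows "\<exists>t. C = D @ t"
proof -
  have DB: "D @ B \<in> normal_patterns N" if "B \<in> normal_patterns q" for B
    using that D N by (auto simp: normal_patterns_def normal_append)
  have "pcoeff N (tmul (ptensor P D) v) C =
      (\<Sum>B\<in>normal_patterns q. pcoeff q v B * (if C = D @ B then 1 else 0))"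
    by (simp add: tmul_ptensor_left_expand[OF v] pcoeff_sum pcoeff_scale pcoeff_ptensor[OF C DB] C)
  with nz obtain B where "pcoeff q v B * (if C = D @ B then 1 else 0) \<noteq> 0"
    by (auto elim: sum.not_neutral_contains_not_neutral)
  then have "C = D @ B" by (simp split: if_split_asm)
  then show ?thesis by blast
qed

lemma pcoeff_tmul_omegas_factor:
  assumes u: "homogeneous p u" and v: "homogeneous q v" and "1 \<le> l"
    and C: "C \<in> normal_patterns (p + 2 * l + q)"
    and nz: "pcoeff (p + 2 * l + q) (tmul (tmul u (ptensor P (replicate l None))) v) C \<noteq> 0"
  shows "\<exists>t1 t2. C = t1 @ replicate l None @ t2"
proof -
  have "tmul (tmul u (ptensor P (replicate l None))) v =
      (\<lambda>w. \<Sum>B\<in>normal_patterns q. pcoeff q v B * tmul u (ptensor P (replicate l None @ B)) w)"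
    by (simp add: tmul_assoc tmul_ptensor_left_expand[OF v] tmul_sum_right tmul_scale_right)
  then have "(\<Sum>B\<in>normal_patterns q. pcoeff q v B *
      pcoeff (p + 2 * l + q) (tmul u (ptensor P (replicate l None @ B))) C) \<noteq> 0"
    using nz C by (simp add: pcoeff_sum pcoeff_scale)
  then obtain B where B: "B \<in> normal_patterns q"
    and nzB: "pcoeff (p + 2 * l + q) (tmul u (ptensor P (replicate l None @ B))) C \<noteq> 0"
    by (auto elim: sum.not_neutral_contains_not_neutral)
  have D: "normal (replicate l None @ B)" "replicate l None @ B \<noteq> []"
      "hd (replicate l None @ B) = None"
    using B normal_omegas \<open>1 \<le> l\<close> by (auto simp: normal_patterns_def normal_append hd_append)
  have "p + 2 * l + q = p + pdeg (replicate l None @ B)"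
    using B by (simp add: normal_patterns_def)
  from pcoeff_tmul_suffix[OF u D this C nzB] show ?thesis by blast
qed

end

section \<open>The probe word\<close>

lemma omegas_Some_eq:
  "replicate j None @ Some u # X = replicate k None @ Some v # Y \<Longrightarrow> j = k \<and> u = v \<and> X = Y"
proof (induction j arbitrary: k)
  case 0 then show ?case by (cases k) auto
next
  case (Suc j) then show ?case by (cases k) auto
qed

text \<open>The probe word \<open>e\<^sub>b \<omega>\<^sup>l\<^sup>-\<^sup>1 C e\<^sub>a\<close> occurs in the cyclic sum of \<open>B \<omega>\<^sup>l\<close> only for \<open>B = C\<close>, and
  only through the rotation that splits the last \<open>\<omega> = \<dots> + P a b e\<^sub>a e\<^sub>b + \<dots>\<close>; the length \<open>l\<close>
  is chosen so large that \<open>C\<close> contains fewer than \<open>l - 1\<close> factors \<open>\<omega>\<close>.\<close>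

locale probe = pattern_basis +
  fixes n :: nat and C and l :: nat
  assumes C_normal: "C \<in> normal_patterns n" and C_ne: "C \<noteq> []" and hd_C: "hd C \<noteq> None"
    and long: "n + 2 \<le> l"
begin

definition probe_word where
  "probe_word = Some b # replicate (l - 1) None @ C @ [Some a]"

lemma C_Cons: obtains u R where "C = Some u # R"
  using C_ne hd_C by (cases C) auto

lemma count_C_less: "count_list C None < l - 1"
proof -
  have "pdeg C = n" "1 \<le> length C" using C_normal C_ne by (auto simp: normal_patterns_def Suc_le_eq)
  then show ?thesis
    using pdeg_eq_length_count[of C] count_le_length[of C None] long by linarith
qed

lemma probe_word_normal: "probe_word \<in> normal_patterns (n + 2 * l)"
proof -
  have "normal (C @ [Some a])" using C_normal a_neq_b by (simp add: normal_patterns_def normal_append)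
  then have "normal (replicate (l - 1) None @ C @ [Some a])"
    using normal_omegas long by (simp add: normal_append del: append_assoc)
  then show ?thesis
    using C_normal long a_neq_b by (simp add: probe_word_def normal_patterns_def normal_Cons)
qed

lemma probe_word_no_omegas_factor: "probe_word \<noteq> t1 @ replicate l None @ t2"
proof
  assume eq: "probe_word = t1 @ replicate l None @ t2"
  obtain u R where CR: "C = Some u # R" by (rule C_Cons)
  obtain t1' where t1: "t1 = Some b # t1'"
    using eq[unfolded probe_word_def] long by (cases t1; cases l) auto
  have eq': "t1' @ replicate l None @ t2 = replicate (l - 1) None @ Some u # R @ [Some a]"
    using eq[unfolded probe_word_def] t1 unfolding CR by simp
  show False
  proof (cases "length t1' \<le> l - 1")
    case True
    then have "(t1' @ replicate l None @ t2) ! (l - 1) = None" using long by (simp add: nth_append)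
    then show False using eq' by (simp add: nth_append)
  next
    case False
    then have "drop l (t1' @ replicate l None @ t2) = drop l t1' @ replicate l None @ t2" by simp
    moreover have "drop l (replicate (l - 1) None @ Some u # R @ [Some a]) = R @ [Some a]"
      using long by simp
    ultimately have "R @ [Some a] = drop l t1' @ replicate l None @ t2" using eq' by simp
    then have "count_list (R @ [Some a]) None \<ge> l" by simp
    then show False using count_C_less CR by simp
  qed
qed

lemma probe_word_no_omegas_suffix: "probe_word \<noteq> t1 @ replicate (l - 1) None @ [Some c]"
proof
  assume "probe_word = t1 @ replicate (l - 1) None @ [Some c]"
  then have "(Some b # replicate (l - 1) None) @ C = t1 @ replicate (l - 1) None"
    by (simp add: probe_word_def)
  then obtain us where "us @ C = replicate (l - 1) None \<or> C = us @ replicate (l - 1) None"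
    unfolding append_eq_append_conv2 by blast
  then show False
  proof
    assume "us @ C = replicate (l - 1) None"
    then have "\<forall>s\<in>set C. s = None" by (metis Un_iff in_set_replicate set_append)
    then show False using C_ne hd_C by (cases C) auto
  next
    assume "C = us @ replicate (l - 1) None"
    then show False using count_C_less by simp
  qed
qed

lemma probe_word_middle:
  assumes j: "0 < j" "j < l - 1" and B: "B \<in> normal_patterns n" "hd B \<noteq> None \<or> set B \<subseteq> {None}"
  shows "probe_word \<noteq> Some d # replicate j None @ B @ replicate (l - 1 - j) None @ [Some c]"
proof
  assume eq: "probe_word = Some d # replicate j None @ B @ replicate (l - 1 - j) None @ [Some c]"
  obtain u R where CR: "C = Some u # R" by (rule C_Cons)
  have e: "replicate (l - 1) None @ Some u # R @ [Some a] =
      replicate j None @ B @ replicate (l - 1 - j) None @ [Some c]"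
    using eq[unfolded probe_word_def] unfolding CR by simp
  have "B \<noteq> []" using B(1) C_normal C_ne length_le_pdeg[of C] by (auto simp: normal_patterns_def)
  show False
  proof (cases "hd B = None")
    case False
    then obtain v B' where "B = Some v # B'" using \<open>B \<noteq> []\<close> by (cases B) auto
    then have "replicate (l - 1) None @ Some u # R @ [Some a] =
        replicate j None @ Some v # B' @ replicate (l - 1 - j) None @ [Some c]"
      using e by simp
    then have "l - 1 = j" by (rule omegas_Some_eq[THEN conjunct1])
    then show False using j by simp
  next
    case True
    then have "\<forall>s\<in>set B. s = None" using B(2) by auto
    then obtain k where "B = replicate k None" by (metis replicate_length_same)
    then have "replicate (l - 1) None @ Some u # R @ [Some a] =
        replicate (j + k + (l - 1 - j)) None @ Some c # []"
      using e by (simp add: replicate_add)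
    then have "R @ [Some a] = []" by (rule omegas_Some_eq[THEN conjunct2, THEN conjunct2])
    then show False by simp
  qed
qed

lemma pcoeff_probe_even:
  assumes B: "B \<in> normal_patterns n" and i: "i < l"
  shows "pcoeff (n + 2 * l) (tmul (tmul (ptensor P (replicate i None)) (ptensor P B))
    (ptensor P (replicate (l - i) None))) probe_word = 0"
proof (rule ccontr)
  assume nz: "pcoeff (n + 2 * l) (tmul (tmul (ptensor P (replicate i None)) (ptensor P B))
    (ptensor P (replicate (l - i) None))) probe_word \<noteq> 0"
  have x: "homogeneous n (ptensor P B)" using B by (rule homogeneous_ptensor_normal)
  show False
  proof (cases "i = 0")
    case True
    have u: "homogeneous n (tmul (ptensor P (replicate i None)) (ptensor P B))"
      using homogeneous_tmul[OF homogeneous_ptensor[of "replicate i None" P] x] True by simp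
    have "\<exists>t. probe_word = t @ replicate l None"
      using pcoeff_tmul_suffix[OF u normal_omegas _ _ _ probe_word_normal] nz long True by simp
    then show False using probe_word_no_omegas_factor[of _ "[]"] by auto
  next
    case False
    have v: "homogeneous (n + 2 * (l - i)) (tmul (ptensor P B) (ptensor P (replicate (l - i) None)))"
      by (rule homogeneous_tmul[OF x homogeneous_ptensor_omegas])
    have N: "n + 2 * l = pdeg (replicate i (None :: 'i option)) + (n + 2 * (l - i))" using i by simp
    have "\<exists>t. probe_word = replicate i None @ t"
      by (rule pcoeff_tmul_prefix[OF v normal_omegas _ _ N probe_word_normal])
        (use nz False in \<open>simp_all add: tmul_assoc\<close>)
    then show False using False by (cases i) (auto simp: probe_word_def)
  qed
qed

lemma pcoeff_probe_inside:
  assumes "length \<alpha> + length \<beta> = n"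
  shows "pcoeff (n + 2 * l) (tmul (tmul (monomial \<alpha>) (ptensor P (replicate l None))) (monomial \<beta>))
    probe_word = 0"
proof (rule ccontr)
  have N: "n + 2 * l = length \<alpha> + 2 * l + length \<beta>" using assms by simp
  assume "pcoeff (n + 2 * l) (tmul (tmul (monomial \<alpha>) (ptensor P (replicate l None))) (monomial \<beta>))
    probe_word \<noteq> 0"
  then have "\<exists>t1 t2. probe_word = t1 @ replicate l None @ t2"
    using pcoeff_tmul_omegas_factor[OF homogeneous_monomial homogeneous_monomial, of l probe_word]
      probe_word_normal long unfolding N by simp
  then show False using probe_word_no_omegas_factor by blast
qed

definition split_pattern where
  "split_pattern j d B c = Some d # replicate j None @ B @ replicate (l - 1 - j) None @ [Some c]"

lemma split_pattern_degree: "B \<in> normal_patterns n \<Longrightarrow> j < l \<Longrightarrow> pdeg (split_pattern j d B c) = n + 2 * l"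
  by (simp add: split_pattern_def normal_patterns_def)

lemma pcoeff_probe_split_last:
  assumes B: "B \<in> normal_patterns n" and "c \<noteq> b"
  shows "pcoeff (n + 2 * l) (ptensor P (split_pattern (l - 1) b B c)) probe_word =
    (if B = C \<and> c = a then 1 else 0)"
proof -
  have l1: "l - 1 \<noteq> 0" using long by simp
  have "normal (B @ [Some c])" using B \<open>c \<noteq> b\<close> by (simp add: normal_patterns_def normal_append)
  then have "normal (replicate (l - 1) None @ B @ [Some c])"
    using normal_omegas[of "l - 1"] l1 by (simp add: normal_append)
  then have "normal (split_pattern (l - 1) b B c)"
    using l1 by (simp add: split_pattern_def normal_Cons)
  then have "split_pattern (l - 1) b B c \<in> normal_patterns (n + 2 * l)"
    using split_pattern_degree[OF B] long by (simp add: normal_patterns_def)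
  moreover have "probe_word = split_pattern (l - 1) b B c \<longleftrightarrow> C = B \<and> a = c"
    by (auto simp: probe_word_def split_pattern_def)
  ultimately show ?thesis using pcoeff_ptensor[OF probe_word_normal] by auto
qed

lemma pcoeff_probe_split_last_other:
  assumes B: "B \<in> normal_patterns n" and "d \<noteq> b"
  shows "pcoeff (n + 2 * l) (ptensor P (split_pattern (l - 1) d B c)) probe_word = 0"
proof (rule ccontr)
  define L where "L = Some d # replicate (l - 1) None"
  have "homogeneous (n + 1) (ptensor P (B @ [Some c]))"
    using homogeneous_ptensor[of "B @ [Some c]" P] B by (simp add: normal_patterns_def)
  moreover have "normal L" "L \<noteq> []" "last L = None" "n + 2 * l = pdeg L + (n + 1)"
    using long normal_omegas[of "l - 1"] by (simp_all add: L_def normal_Cons)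
  moreover assume "pcoeff (n + 2 * l) (ptensor P (split_pattern (l - 1) d B c)) probe_word \<noteq> 0"
  then have "pcoeff (n + 2 * l) (tmul (ptensor P L) (ptensor P (B @ [Some c]))) probe_word \<noteq> 0"
    by (simp add: split_pattern_def L_def flip: ptensor_append_tmul)
  ultimately have "\<exists>t. probe_word = L @ t"
    using pcoeff_tmul_prefix[OF _ _ _ _ _ probe_word_normal] by blast
  then show False using \<open>d \<noteq> b\<close> by (auto simp: probe_word_def L_def)
qed

lemma pcoeff_probe_split_first:
  assumes B: "B \<in> normal_patterns n"
  shows "pcoeff (n + 2 * l) (ptensor P (split_pattern 0 d B c)) probe_word = 0"
proof (rule ccontr)
  define R where "R = replicate (l - 1) None @ [Some c]"
  have "homogeneous (n + 1) (ptensor P (Some d # B))"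
    using homogeneous_ptensor[of "Some d # B" P] B by (simp add: normal_patterns_def)
  moreover have "normal R" "R \<noteq> []" "hd R = None" "n + 2 * l = n + 1 + pdeg R"
    using long by (simp_all add: R_def normal_omegas_snoc)
  moreover assume "pcoeff (n + 2 * l) (ptensor P (split_pattern 0 d B c)) probe_word \<noteq> 0"
  then have "pcoeff (n + 2 * l) (tmul (ptensor P (Some d # B)) (ptensor P R)) probe_word \<noteq> 0"
    by (simp add: split_pattern_def R_def flip: ptensor_append_tmul)
  ultimately have "\<exists>t. probe_word = t @ R"
    using pcoeff_tmul_suffix[OF _ _ _ _ _ probe_word_normal] by blast
  then show False using probe_word_no_omegas_suffix by (auto simp: R_def)
qed

lemma pcoeff_probe_split_middle:
  assumes B: "B \<in> normal_patterns n" "hd B \<noteq> None \<or> set B \<subseteq> {None}" and j: "0 < j" "j < l - 1"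
  shows "pcoeff (n + 2 * l) (ptensor P (split_pattern j d B c)) probe_word = 0"
proof -
  have "hd (replicate (l - 1 - j) None @ [Some c]) = None" using j by simp
  then have "normal (B @ replicate (l - 1 - j) None @ [Some c])"
    using B(1) normal_omegas_snoc[of "l - 1 - j" c] by (simp add: normal_patterns_def normal_append)
  then have "normal (replicate j None @ B @ replicate (l - 1 - j) None @ [Some c])"
    using j normal_omegas[of j] by (simp add: normal_append)
  then have "normal (split_pattern j d B c)"
    using j by (simp add: split_pattern_def normal_Cons)
  then have "split_pattern j d B c \<in> normal_patterns (n + 2 * l)"
    using split_pattern_degree[OF B(1)] j by (simp add: normal_patterns_def)
  moreover have "probe_word \<noteq> split_pattern j d B c"
    using probe_word_middle[OF j B] by (simp add: split_pattern_def)
  ultimately show ?thesis using pcoeff_ptensor[OF probe_word_normal] by auto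
qed

lemma pcoeff_probe_odd:
  assumes B: "B \<in> normal_patterns n" "hd B \<noteq> None \<or> set B \<subseteq> {None}" and j: "j < l"
  shows "P c d * pcoeff (n + 2 * l) (tmul (tmul (ptensor P (Some d # replicate j None)) (ptensor P B))
      (ptensor P (replicate (l - 1 - j) None @ [Some c]))) probe_word =
    (if j = l - 1 \<and> c = a \<and> d = b \<and> B = C then P a b else 0)"
proof (cases "P c d = 0")
  case True
  then show ?thesis using nonzero by auto
next
  case False
  then have "c \<noteq> d" using P_diag by auto
  have "split_pattern j d B c = (Some d # replicate j None) @ B @ (replicate (l - 1 - j) None @ [Some c])"
    by (simp add: split_pattern_def)
  then have "tmul (tmul (ptensor P (Some d # replicate j None)) (ptensor P B))
      (ptensor P (replicate (l - 1 - j) None @ [Some c])) = ptensor P (split_pattern j d B c)"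
    by (simp only: ptensor_append_tmul tmul_assoc)
  moreover have "pcoeff (n + 2 * l) (ptensor P (split_pattern j d B c)) probe_word =
      (if j = l - 1 \<and> c = a \<and> d = b \<and> B = C then 1 else 0)"
  proof -
    consider (last) "j = l - 1" | (first) "j = 0" "j \<noteq> l - 1" | (middle) "0 < j" "j < l - 1"
      using j by linarith
    then show ?thesis
    proof cases
      case last
      show ?thesis
      proof (cases "d = b")
        case True
        then show ?thesis using pcoeff_probe_split_last[OF B(1)] \<open>c \<noteq> d\<close> last by auto
      qed (use pcoeff_probe_split_last_other[OF B(1)] last in simp)
    qed (use pcoeff_probe_split_first[OF B(1)] pcoeff_probe_split_middle[OF B] in simp_all)
  qed
  ultimately show ?thesis by simp
qed

lemma pcoeff_probe_cyclic_sum: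
  assumes B: "B \<in> normal_patterns n" "hd B \<noteq> None \<or> set B \<subseteq> {None}"
  shows "pcoeff (n + 2 * l) (cyclic_sum (tmul (ptensor P B) (ptensor P (replicate l None)))) probe_word =
    (if B = C then P a b else 0)"
proof -
  have x: "homogeneous n (ptensor P B)" using B(1) by (rule homogeneous_ptensor_normal)
  have "pcoeff (n + 2 * l) (cyclic_sum (tmul (ptensor P B) (ptensor P (replicate l None)))) probe_word =
    (\<Sum>i<l. pcoeff (n + 2 * l) (tmul (tmul (ptensor P (replicate i None)) (ptensor P B))
              (ptensor P (replicate (l - i) None))) probe_word
       + (\<Sum>c\<in>UNIV. \<Sum>d\<in>UNIV. P c d * pcoeff (n + 2 * l)
            (tmul (tmul (ptensor P (Some d # replicate i None)) (ptensor P B))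
                 (ptensor P (replicate (l - 1 - i) None @ [Some c]))) probe_word))
  + (\<Sum>k<n. \<Sum>\<alpha>\<in>{\<alpha>. length \<alpha> = k}. \<Sum>\<beta>\<in>{\<beta>. length \<beta> = n - k}.
       ptensor P B (\<beta> @ \<alpha>) * pcoeff (n + 2 * l)
         (tmul (tmul (monomial \<alpha>) (ptensor P (replicate l None))) (monomial \<beta>)) probe_word)"
    by (simp add: pcoeff_cong[OF cyclic_sum_tmul_omegas[OF x]] pcoeff_add pcoeff_sum pcoeff_scale
        probe_word_normal)
  also have "\<dots> = (\<Sum>i<l. \<Sum>c\<in>UNIV. \<Sum>d\<in>UNIV. if i = l - 1 \<and> c = a \<and> d = b \<and> B = C then P a b else 0)"
    by (simp add: pcoeff_probe_even[OF B(1)] pcoeff_probe_odd[OF B, simplified] pcoeff_probe_inside)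
  also have "\<dots> = (\<Sum>i<l. \<Sum>c\<in>UNIV. \<Sum>d\<in>UNIV.
      if d = b then if c = a then if i = l - 1 then if B = C then P a b else 0 else 0 else 0 else 0)"
    by (intro sum.cong refl) auto
  also have "\<dots> = (if B = C then P a b else 0)"
    using long by simp
  finally show ?thesis .
qed

end

section \<open>Homogeneous tensors with vanishing cyclic sums against all powers of \<open>\<omega>\<close>\<close>

context pattern_basis
begin

lemma cyclic_sum_omegas_alternating:
  assumes "even M"
  shows "cyclic_sum (ptensor P (replicate M None)) (concat (replicate M [a, b])) = of_nat (2 * M) * P a b ^ M"
proof -
  have "P b a ^ M = P a b ^ M" using assms antisym[of b a] by simp
  then show ?thesis
    by (simp add: cyclic_sum_def rotate_alternating ptensor_omegas_alternating length_concat
        sum_list_replicate if_distrib cong: if_cong)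
qed

lemma rotate_omegas_normal:
  assumes "C \<in> normal_patterns n"
  shows "rotate_omegas C \<in> normal_patterns n"
proof -
  obtain k D where C: "C = replicate k None @ D" and rot: "rotate_omegas C = D @ replicate k None"
    by (rule rotate_omegas_split)
  then have "normal D" using assms by (simp add: normal_patterns_def normal_append)
  then have "normal (D @ replicate k None)"
    using normal_omegas[of k] by (cases "k = 0") (simp_all add: normal_append)
  then show ?thesis using assms unfolding rot[symmetric] by (simp add: normal_patterns_def)
qed

lemma homogeneous_eq_rotated_mod_tcomm:
  assumes x: "homogeneous n x"
  obtains \<gamma> y where "homogeneous (n - 2) y" and "x = (\<lambda>w. pcomb n \<gamma> w + tcomm (bivector P) y w)"
    and "\<And>C. C \<in> normal_patterns n \<Longrightarrow> \<gamma> C \<noteq> 0 \<Longrightarrow> hd C \<noteq> None \<or> set C \<subseteq> {None}"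
proof -
  have "\<exists>y. homogeneous (n - 2) y \<and>
      (\<forall>w. ptensor P B w = ptensor P (rotate_omegas B) w + tcomm (bivector P) y w)"
    if "B \<in> normal_patterns n" for B
    using ptensor_rotate_omegas_mod_tcomm[of B P] that by (simp add: normal_patterns_def fun_eq_iff)
  then have "\<forall>B\<in>normal_patterns n. \<exists>y. homogeneous (n - 2) y \<and>
      (\<forall>w. ptensor P B w = ptensor P (rotate_omegas B) w + tcomm (bivector P) y w)" by blast
  then obtain Y where Y: "\<forall>B\<in>normal_patterns n. homogeneous (n - 2) (Y B) \<and>
      (\<forall>w. ptensor P B w = ptensor P (rotate_omegas B) w + tcomm (bivector P) (Y B) w)"
    by (rule bchoice[THEN exE])
  define c where "c = pcoeff n x"
  define \<gamma> where "\<gamma> C = (\<Sum>B\<in>normal_patterns n. if rotate_omegas B = C then c B else 0)" for C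
  define y where "y = (\<lambda>w. \<Sum>B\<in>normal_patterns n. c B * Y B w)"
  have "homogeneous (n - 2) y"
    unfolding y_def using Y by (intro homogeneous_sum homogeneous_scale) simp
  moreover have "x = (\<lambda>w. pcomb n \<gamma> w + tcomm (bivector P) y w)"
  proof
    fix w
    have pc: "pcomb n \<gamma> w = (\<Sum>B\<in>normal_patterns n. c B * ptensor P (rotate_omegas B) w)"
      unfolding \<gamma>_def by (rule pcomb_reindex) (rule rotate_omegas_normal)
    have yw: "tcomm (bivector P) y w = (\<Sum>B\<in>normal_patterns n. c B * tcomm (bivector P) (Y B) w)"
      unfolding y_def tcomm_sum_right tcomm_scale_right ..
    have "x w = pcomb n c w" using pcomb_pcoeff[OF x] by (simp add: c_def)
    also have "\<dots> = (\<Sum>B\<in>normal_patterns n. c B * ptensor P B w)" by (simp add: pcomb_def)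
    also have "\<dots> = (\<Sum>B\<in>normal_patterns n. c B * (ptensor P (rotate_omegas B) w + tcomm (bivector P) (Y B) w))"
      using Y by (intro sum.cong refl) simp
    also have "\<dots> = pcomb n \<gamma> w + tcomm (bivector P) y w"
      unfolding pc yw by (simp add: distrib_left sum.distrib)
    finally show "x w = pcomb n \<gamma> w + tcomm (bivector P) y w" .
  qed
  moreover have "hd C \<noteq> None \<or> set C \<subseteq> {None}" if "\<gamma> C \<noteq> 0" for C
  proof -
    obtain B where "(if rotate_omegas B = C then c B else 0) \<noteq> 0"
      using \<open>\<gamma> C \<noteq> 0\<close> unfolding \<gamma>_def by (rule sum.not_neutral_contains_not_neutral)
    then have "rotate_omegas B = C" by (simp split: if_split_asm)
    then show ?thesis using rotate_omegas_cases[of B] by simp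
  qed
  ultimately show ?thesis using that by blast
qed

lemma cyclic_kernel_coefficient_letter:
  assumes bad: "\<And>B. B \<in> normal_patterns n \<Longrightarrow> \<gamma> B \<noteq> 0 \<Longrightarrow> hd B \<noteq> None \<or> set B \<subseteq> {None}"
    and H: "cyclic_sum (tmul (pcomb n \<gamma>) (ptensor P (replicate (n + 2) None))) = (\<lambda>w. 0)"
    and C: "C \<in> normal_patterns n" "C \<noteq> []" "hd C \<noteq> None"
  shows "\<gamma> C = 0"
proof -
  interpret probe P a b n C "n + 2"
    by unfold_locales (use C in simp_all)
  let ?\<omega>l = "ptensor P (replicate (n + 2) None)"
  have "0 = pcoeff (n + 2 * (n + 2)) (cyclic_sum (tmul (pcomb n \<gamma>) ?\<omega>l)) probe_word"
    using pcoeff_zero[OF probe_word_normal] H by simp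
  also have "cyclic_sum (tmul (pcomb n \<gamma>) ?\<omega>l) =
      (\<lambda>w. \<Sum>B\<in>normal_patterns n. \<gamma> B * cyclic_sum (tmul (ptensor P B) ?\<omega>l) w)"
    by (simp add: pcomb_def tmul_sum_left tmul_scale_left cyclic_sum_sum)
  also have "pcoeff (n + 2 * (n + 2)) \<dots> probe_word = (\<Sum>B\<in>normal_patterns n. \<gamma> B *
      pcoeff (n + 2 * (n + 2)) (cyclic_sum (tmul (ptensor P B) ?\<omega>l)) probe_word)"
    by (simp only: pcoeff_sum[OF probe_word_normal] pcoeff_scale[OF probe_word_normal])
  also have "\<dots> = (\<Sum>B\<in>normal_patterns n. if B = C then \<gamma> C * P a b else 0)"
  proof (rule sum.cong[OF refl])
    fix B assume B: "B \<in> normal_patterns n"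
    show "\<gamma> B * pcoeff (n + 2 * (n + 2)) (cyclic_sum (tmul (ptensor P B) ?\<omega>l)) probe_word =
        (if B = C then \<gamma> C * P a b else 0)"
      using pcoeff_probe_cyclic_sum[OF B bad[OF B]] by (cases "\<gamma> B = 0") auto
  qed
  also have "\<dots> = \<gamma> C * P a b" using C(1) finite_normal_patterns by simp
  finally show ?thesis using nonzero by simp
qed

lemma cyclic_kernel_coefficient_omegas:
  assumes H: "\<And>l. 1 \<le> l \<Longrightarrow>
    cyclic_sum (tmul (\<lambda>w. c * ptensor P (replicate m None) w) (ptensor P (replicate l None))) = (\<lambda>w. 0)"
  shows "c = 0"
proof -
  define l where "l = (if even m then 2 else 1 :: nat)"
  define M where "M = m + l"
  have M: "even M" "1 \<le> M" and "1 \<le> l" by (auto simp: M_def l_def)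
  have "tmul (\<lambda>w. c * ptensor P (replicate m None) w) (ptensor P (replicate l None)) =
      (\<lambda>w. c * ptensor P (replicate M None) w)"
    by (simp add: tmul_scale_left M_def replicate_add ptensor_append_tmul)
  then have "c * cyclic_sum (ptensor P (replicate M None)) (concat (replicate M [a, b])) = 0"
    using H[OF \<open>1 \<le> l\<close>] by (metis cyclic_sum_scale)
  then show ?thesis using cyclic_sum_omegas_alternating[OF M(1)] M(2) nonzero by simp
qed

lemma cyclic_kernel_pcomb_eq_0:
  assumes bad: "\<And>B. B \<in> normal_patterns n \<Longrightarrow> \<gamma> B \<noteq> 0 \<Longrightarrow> hd B \<noteq> None \<or> set B \<subseteq> {None}"
    and H: "\<And>l. 1 \<le> l \<Longrightarrow> cyclic_sum (tmul (pcomb n \<gamma>) (ptensor P (replicate l None))) = (\<lambda>w. 0)"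
  shows "pcomb n \<gamma> = (\<lambda>w. 0)"
proof -
  define Z where "Z = replicate (n div 2) (None :: 'i option)"
  have \<gamma>_Z: "\<gamma> C = 0" if C: "C \<in> normal_patterns n" "C \<noteq> Z" for C
  proof (cases "C \<noteq> [] \<and> hd C \<noteq> None")
    case True
    then show ?thesis using cyclic_kernel_coefficient_letter[OF bad H C(1)] by simp
  next
    case False
    have "C = Z" if "set C \<subseteq> {None}"
    proof -
      have "\<forall>s\<in>set C. s = None" using that by auto
      then have "replicate (length C) None = C" by (rule replicate_length_same)
      then obtain k where "C = replicate k None" by metis
      then show "C = Z" using C(1) by (auto simp: Z_def normal_patterns_def)
    qed
    then show ?thesis using bad[OF C(1)] C(2) False by (cases C) auto
  qed
  define c where "c = (if Z \<in> normal_patterns n then \<gamma> Z else 0)"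
  have pcomb_Z: "pcomb n \<gamma> = (\<lambda>w. c * ptensor P Z w)"
  proof
    fix w
    have "pcomb n \<gamma> w = (\<Sum>C\<in>normal_patterns n. if C = Z then \<gamma> Z * ptensor P Z w else 0)"
      unfolding pcomb_def by (rule sum.cong) (auto simp: \<gamma>_Z)
    then show "pcomb n \<gamma> w = c * ptensor P Z w" by (simp add: c_def finite_normal_patterns)
  qed
  have "c = 0"
  proof (rule cyclic_kernel_coefficient_omegas)
    fix l :: nat assume "1 \<le> l"
    show "cyclic_sum (tmul (\<lambda>w. c * ptensor P (replicate (n div 2) None) w)
        (ptensor P (replicate l None))) = (\<lambda>w. 0)"
      using H[OF \<open>1 \<le> l\<close>] unfolding pcomb_Z Z_def .
  qed
  then show ?thesis unfolding pcomb_Z by simp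
qed

theorem homogeneous_cyclic_kernel_eq_tcomm:
  assumes x: "homogeneous n x"
    and H: "\<And>l. 1 \<le> l \<Longrightarrow> cyclic_sum (tmul x (ptensor P (replicate l None))) = (\<lambda>w. 0)"
  shows "\<exists>y. homogeneous (n - 2) y \<and> x = tcomm (bivector P) y"
proof -
  obtain \<gamma> y where y: "homogeneous (n - 2) y" and x_eq: "x = (\<lambda>w. pcomb n \<gamma> w + tcomm (bivector P) y w)"
    and bad: "\<And>C. C \<in> normal_patterns n \<Longrightarrow> \<gamma> C \<noteq> 0 \<Longrightarrow> hd C \<noteq> None \<or> set C \<subseteq> {None}"
    using homogeneous_eq_rotated_mod_tcomm[OF x] by blast
  \<comment> \<open>\<open>\<omega>\<close> commutes with \<open>\<omega>\<^sup>l\<close>, so the commutator part does not contribute to the cyclic sums\<close>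
  have H': "cyclic_sum (tmul (pcomb n \<gamma>) (ptensor P (replicate l None))) = (\<lambda>w. 0)" if "1 \<le> l" for l
  proof -
    have "tmul (bivector P) (ptensor P (replicate l None)) = tmul (ptensor P (replicate l None)) (bivector P)"
      by (simp flip: ptensor_None ptensor_append_tmul add: replicate_append_same)
    then have "tmul (pcomb n \<gamma>) (ptensor P (replicate l None)) = (\<lambda>w.
        tmul x (ptensor P (replicate l None)) w - tcomm (bivector P) (tmul y (ptensor P (replicate l None))) w)"
      unfolding x_eq by (simp add: tmul_add_left tmul_tcomm_commuting)
    then show ?thesis using H[OF that] by (simp add: cyclic_sum_diff cyclic_sum_tcomm)
  qed
  have "x = tcomm (bivector P) y" using x_eq cyclic_kernel_pcomb_eq_0[OF bad H'] by simp
  then show ?thesis using y by blast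
qed

end

section \<open>The bivector of a symplectic form\<close>

lemma symplectic_represents_antisym:
  fixes W P :: "'i::finite \<Rightarrow> 'i \<Rightarrow> 'k::field"
  assumes W: "symplectic_form W" and PW: "represents P W"
  shows "P i j = - P j i"
proof -
  have W_anti: "W k m = - W m k" for k m using W unfolding symplectic_form_def by blast
  have PW_id: "(\<Sum>k\<in>UNIV. P i k * W k j) = (if i = j then 1 else 0)" for i j
    using PW by (simp add: represents_def)
  \<comment> \<open>\<open>Q = -P\<^sup>T\<close> is a right inverse of \<open>W\<close>, hence equal to the left inverse \<open>P\<close>\<close>
  define Q where "Q k m = - P m k" for k m
  have WQ: "(\<Sum>k\<in>UNIV. W m k * Q k j) = (if m = j then 1 else 0)" for m j
  proof -
    have "(\<Sum>k\<in>UNIV. W m k * Q k j) = (\<Sum>k\<in>UNIV. P j k * W k m)"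
    proof (rule sum.cong[OF refl])
      fix k
      show "W m k * Q k j = P j k * W k m" using W_anti[of m k] by (simp add: Q_def)
    qed
    then show ?thesis using PW_id[of j m] by auto
  qed
  have "P i j = (\<Sum>k\<in>UNIV. if k = j then P i k else 0)" by simp
  also have "\<dots> = (\<Sum>k\<in>UNIV. P i k * (\<Sum>m\<in>UNIV. W k m * Q m j))"
    by (rule sum.cong) (simp_all add: WQ)
  also have "\<dots> = (\<Sum>k\<in>UNIV. \<Sum>m\<in>UNIV. P i k * W k m * Q m j)"
    by (simp add: sum_distrib_left mult.assoc)
  also have "\<dots> = (\<Sum>m\<in>UNIV. \<Sum>k\<in>UNIV. P i k * W k m * Q m j)"
    by (rule sum.swap)
  also have "\<dots> = (\<Sum>m\<in>UNIV. if i = m then Q m j else 0)"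
    by (rule sum.cong) (simp_all add: PW_id flip: sum_distrib_right)
  also have "\<dots> = Q i j" by simp
  finally show ?thesis by (simp add: Q_def)
qed

lemma represents_nonzero_entry:
  fixes W P :: "'i::finite \<Rightarrow> 'i \<Rightarrow> 'k::field"
  assumes "represents P W"
  obtains i j where "P i j \<noteq> 0"
proof -
  have "(\<Sum>k\<in>UNIV. P undefined k * W k undefined) \<noteq> 0" using assms by (simp add: represents_def)
  then obtain k where "P undefined k * W k undefined \<noteq> 0" by (rule sum.not_neutral_contains_not_neutral)
  then show ?thesis using that by auto
qed

lemma homogeneous_bivector: "homogeneous 2 (bivector P)"
  by (simp add: homogeneous_def bivector_def)

theorem proposition3p9:
  fixes W P :: "'i::finite \<Rightarrow> 'i \<Rightarrow> 'k::field_char_0"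
    and a :: "'i list \<Rightarrow> 'k"
  assumes "symplectic_form W"
    and "represents P W"
    and "\<forall>l::nat. l \<ge> 1 \<longrightarrow> cyc_zero (tmul a (tpow (bivector P) l))"
  shows "\<exists>b :: 'i list \<Rightarrow> 'k. a = tcomm (bivector P) b"
proof -
  obtain i j where "P i j \<noteq> 0" using represents_nonzero_entry[OF assms(2)] .
  interpret pattern_basis P i j
    using symplectic_represents_antisym[OF assms(1,2)] \<open>P i j \<noteq> 0\<close> by unfold_locales
  have "\<exists>y. homogeneous (n - 2) y \<and> degree_part n a = tcomm (bivector P) y" for n
  proof (rule homogeneous_cyclic_kernel_eq_tcomm[OF homogeneous_degree_part])
    fix l :: nat assume "1 \<le> l"
    then have "cyc_zero (tmul a (tpow (bivector P) l))" using assms(3) by simp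
    then have "cyclic_sum (tmul a (ptensor P (replicate l None))) = (\<lambda>w. 0)"
      unfolding tpow_bivector by (rule cyclic_sum_cyc_zero)
    then show "cyclic_sum (tmul (degree_part n a) (ptensor P (replicate l None))) = (\<lambda>w. 0)"
      by (rule cyclic_sum_tmul_degree_part[OF homogeneous_ptensor_omegas])
  qed
  then obtain y where "\<And>n. degree_part n a = tcomm (bivector P) (y n)" by metis
  then show ?thesis using tcomm_of_degree_parts[OF homogeneous_bivector] by blast
qed

end
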